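(* Let $F:S_N\times\mathbb{R}^N\times\mathbb{R}\to\mathbb{R}$ (independent of $x$) satisfy (H0), (H1) and (H3), and let $l:\mathbb{R}^N\to S_N$ be a linear map. Then the function $g:\mathbb{R}^N\to\mathbb{R}$, $g(p)=F\big(l(p)+p\otimes p,\ p,\ 1\big)$, is convex.
   Context: $S_N$ is the space of real symmetric $N\times N$ matrices and $p\otimes p$ is the matrix $(p_ip_j)_{i,j}$. For $0<\lambda\le\Lambda$, $\mathcal M^\pm$ are the Pucci operators ($\sup$/$\inf$ of $\mathrm{tr}(AM)$ over $A\in S_N$ with eigenvalues in $[\lambda,\Lambda]$). Hypotheses (for $x$-independent $F$): (H0) $F(sM,sp,su)=sF(M,p,u)$ for $s\ge0$; (H1) for some $\gamma,\delta\ge0$: $\mathcal M^-(M-M')-\gamma|p-q|-\delta|u-v|\le F(M,p,u)-F(M',q,v)\le\mathcal M^+(M-M')+\gamma|p-q|+\delta|u-v|$ for all arguments; (H3) with $G(M,p,u)=-F(-M,-p,-u)$: $G(M-M',p-q,u-v)\le F(M,p,u)-F(M',q,v)\le F(M-M',p-q,u-v)$. *)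

theory Defs
  imports "HOL-Analysis.Analysis"
begin

text \<open>Real symmetric N x N matrices (S_N), with N = CARD('n).\<close>
definition symmetric_mat :: "real^'n^'n \<Rightarrow> bool" where
  "symmetric_mat M \<longleftrightarrow> transpose M = M"

definition is_eigenvalue :: "real^'n^'n \<Rightarrow> real \<Rightarrow> bool" where
  "is_eigenvalue A c \<longleftrightarrow> (\<exists>v. v \<noteq> 0 \<and> A *v v = c *s v)"

definition pucci_class :: "real \<Rightarrow> real \<Rightarrow> (real^'n^'n) set" where
  "pucci_class lam Lam = {A. symmetric_mat A \<and> (\<forall>c. is_eigenvalue A c \<longrightarrow> lam \<le> c \<and> c \<le> Lam)}"

definition pucci_plus :: "real \<Rightarrow> real \<Rightarrow> real^'n^'n \<Rightarrow> real" where
  "pucci_plus lam Lam M = Sup ((\<lambda>A. trace (A ** M)) ` pucci_class lam Lam)"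

definition pucci_minus :: "real \<Rightarrow> real \<Rightarrow> real^'n^'n \<Rightarrow> real" where
  "pucci_minus lam Lam M = Inf ((\<lambda>A. trace (A ** M)) ` pucci_class lam Lam)"

definition tensor :: "real^'n \<Rightarrow> real^'n \<Rightarrow> real^'n^'n" where
  "tensor p q = (\<chi> i j. p $ i * q $ j)"

end

theory Submission
  imports Defs
begin

text \<open>
  Write g(p) = F(l p + p \<otimes> p, p, 1) and let z = (1-t) x + t y.
  Linearity of l and the identity
    z \<otimes> z = (1-t) x \<otimes> x + t y \<otimes> y - (1-t) t (x-y) \<otimes> (x-y)
  show that the matrix argument of g(z) is the convex combination S of the matrix
  arguments of g(x), g(y), minus a positive semidefinite rank-one matrix.
  (1) F is non-increasing under subtraction of such matrices: by (H3) the drop is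
      bounded by F(-P,0,0), by (H1) this is at most the Pucci maximum of -P, and
      that is \<le> 0 because every admissible coefficient matrix A has nonnegative
      eigenvalues, hence is positive semidefinite (proved via the Rayleigh quotient).
  (2) F is sublinear: (H3) gives subadditivity and (H0) positive homogeneity, so F of
      a convex combination is at most the convex combination of the values.
  Chaining (1) and (2) gives g(z) \<le> (1-t) g(x) + t g(y).
\<close>

lemma symmetric_mat_add: "symmetric_mat A \<Longrightarrow> symmetric_mat B \<Longrightarrow> symmetric_mat (A + B)"
  by (simp add: symmetric_mat_def transpose_def vec_eq_iff)

lemma symmetric_mat_diff: "symmetric_mat A \<Longrightarrow> symmetric_mat B \<Longrightarrow> symmetric_mat (A - B)"
  by (simp add: symmetric_mat_def transpose_def vec_eq_iff)

lemma symmetric_mat_scaleR: "symmetric_mat A \<Longrightarrow> symmetric_mat (c *\<^sub>R A)"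
  by (simp add: symmetric_mat_def transpose_scalar)

lemma symmetric_mat_uminus: "symmetric_mat A \<Longrightarrow> symmetric_mat (- A)"
  by (simp add: symmetric_mat_def transpose_def vec_eq_iff)

lemma symmetric_mat_zero: "symmetric_mat 0"
  by (simp add: symmetric_mat_def transpose_def vec_eq_iff)

lemma symmetric_mat_tensor: "symmetric_mat (tensor p p)"
  by (simp add: symmetric_mat_def transpose_def vec_eq_iff tensor_def)

lemma symmetric_mat_inner_swap:
  assumes "symmetric_mat A"
  shows "inner x (A *v y) = inner y (A *v x)"
proof -
  have "inner x (A *v y) = inner (x v* A) y" by (simp add: dot_lmul_matrix)
  also have "x v* A = A *v x"
    using assms by (simp add: symmetric_mat_def flip: transpose_matrix_vector)
  finally show ?thesis by (simp add: inner_commute)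
qed

lemma quadratic_form_line:
  assumes "symmetric_mat A"
  shows "inner (x + t *\<^sub>R y) (A *v (x + t *\<^sub>R y)) =
     inner x (A *v x) + 2 * t * inner y (A *v x) + t\<^sup>2 * inner y (A *v y)"
  using symmetric_mat_inner_swap[OF assms, of x y]
  by (simp add: algebra_simps inner_add_left inner_add_right power2_eq_square)

text \<open>The quadratic form attains its minimum m on the unit sphere, at some x;
  by homogeneity m |z|^2 is then a lower bound for the form everywhere.\<close>
lemma quadratic_form_min_on_sphere:
  fixes A :: "real^'n^'n"
  obtains x where "norm x = 1"
    and "\<And>z. inner x (A *v x) * inner z z \<le> inner z (A *v z)"
proof -
  define f where "f = (\<lambda>x::real^'n. inner x (A *v x))"
  have cont: "continuous_on (sphere 0 1) f" unfolding f_def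
    by (intro continuous_intros linear_continuous_on matrix_vector_mul_linear)
  have "axis undefined (1::real) \<in> sphere (0::real^'n) 1" by simp
  hence ne: "sphere (0::real^'n) 1 \<noteq> {}" by blast
  obtain x where xs: "x \<in> sphere 0 1" and xmin: "\<And>z. z \<in> sphere 0 1 \<Longrightarrow> f x \<le> f z"
    using continuous_attains_inf[OF compact_sphere ne cont] by blast
  have "f x * inner z z \<le> f z" for z
  proof (cases "z = 0")
    case True thus ?thesis by (simp add: f_def)
  next
    case False
    have "f x \<le> f ((1 / norm z) *\<^sub>R z)" using False by (intro xmin) simp
    also have "\<dots> = f z / (norm z)\<^sup>2" unfolding f_def
      by (simp add: matrix_vector_mult_scaleR power2_eq_square)
    finally show ?thesis using False by (simp add: field_simps power2_norm_eq_inner)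
  qed
  with xs show ?thesis using that unfolding f_def by simp
qed

text \<open>A zero of a positive semidefinite symmetric form lies in the kernel: otherwise
  moving a little from x in direction -Bx makes the form negative.\<close>
lemma psd_isotropic_in_kernel:
  fixes B :: "real^'n^'n"
  assumes sym: "symmetric_mat B" and psd: "\<And>z. 0 \<le> inner z (B *v z)"
    and zero: "inner x (B *v x) = 0"
  shows "B *v x = 0"
proof (rule ccontr)
  assume "B *v x \<noteq> 0"
  define y where "y = B *v x"
  define c where "c = inner y y"
  define d where "d = inner y (B *v y)"
  define t where "t = - c / (d + 1)"
  have c: "c > 0" using \<open>B *v x \<noteq> 0\<close> by (simp add: c_def y_def)
  have d: "d \<ge> 0" using psd by (simp add: d_def)
  have t: "t < 0" and td: "t * d = - c - t"
    using c d by (simp_all add: t_def divide_neg_pos field_simps)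
  have "0 \<le> inner (x + t *\<^sub>R y) (B *v (x + t *\<^sub>R y))" by (rule psd)
  also have "\<dots> = t * (2 * c + t * d)"
    using quadratic_form_line[OF sym, of x t y] zero
    by (simp add: c_def d_def y_def algebra_simps power2_eq_square)
  also have "\<dots> < 0" using t c td by (simp add: mult_neg_pos)
  finally show False by simp
qed

text \<open>The minimiser on the sphere is an eigenvector with eigenvalue m, so m \<ge> 0
  and the form is nonnegative.\<close>
lemma psd_of_nonneg_eigenvalues:
  fixes A :: "real^'n^'n"
  assumes sym: "symmetric_mat A" and eig: "\<And>c. is_eigenvalue A c \<Longrightarrow> 0 \<le> c"
  shows "0 \<le> inner w (A *v w)"
proof -
  obtain x where nx: "norm x = 1"
    and lb: "\<And>z. inner x (A *v x) * inner z z \<le> inner z (A *v z)"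
    using quadratic_form_min_on_sphere by blast
  define m where "m = inner x (A *v x)"
  define B where "B = A - m *\<^sub>R mat 1"
  have Bv: "B *v z = A *v z - m *\<^sub>R z" for z
    by (simp add: B_def matrix_vector_mult_diff_rdistrib flip: scaleR_matrix_vector_assoc)
  have "symmetric_mat (m *\<^sub>R mat 1 :: real^'n^'n)"
    by (simp add: symmetric_mat_def transpose_scalar transpose_mat)
  hence "symmetric_mat B" unfolding B_def using sym by (rule symmetric_mat_diff[rotated])
  moreover have "0 \<le> inner z (B *v z)" for z
    using lb[of z] by (simp add: Bv m_def inner_diff_right)
  moreover have "inner x (B *v x) = 0"
    using nx by (simp add: Bv m_def inner_diff_right flip: power2_norm_eq_inner)
  ultimately have "B *v x = 0" by (rule psd_isotropic_in_kernel)
  hence "A *v x = m *s x" by (simp add: Bv scalar_mult_eq_scaleR)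
  moreover have "x \<noteq> 0" using nx by auto
  ultimately have "is_eigenvalue A m" unfolding is_eigenvalue_def by blast
  hence "0 \<le> m * inner w w" by (simp add: eig)
  thus ?thesis using lb[of w] by (simp add: m_def)
qed

lemma trace_mult_neg_tensor: "trace (A ** (- tensor w w)) = - inner w (A *v w)"
  by (simp add: trace_def matrix_matrix_mult_def tensor_def inner_vec_def
        matrix_vector_mult_def sum_distrib_left sum_negf algebra_simps)

lemma scaled_identity_in_pucci_class:
  assumes "lam \<le> Lam"
  shows "lam *\<^sub>R (mat 1 :: real^'n^'n) \<in> pucci_class lam Lam"
proof -
  have "lam = c" if "is_eigenvalue (lam *\<^sub>R (mat 1 :: real^'n^'n)) c" for c
  proof -
    from that obtain v :: "real^'n" where "v \<noteq> 0" and "lam *\<^sub>R v = c *\<^sub>R v"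
      unfolding is_eigenvalue_def
      by (auto simp: scalar_mult_eq_scaleR simp flip: scaleR_matrix_vector_assoc)
    thus ?thesis by (metis scaleR_cancel_right)
  qed
  thus ?thesis using assms
    by (auto simp: pucci_class_def symmetric_mat_def transpose_scalar transpose_mat)
qed

lemma pucci_plus_neg_tensor_nonpos:
  assumes "0 < lam" "lam \<le> Lam"
  shows "pucci_plus lam Lam (- tensor w w) \<le> 0"
  unfolding pucci_plus_def
proof (rule cSup_least)
  show "(\<lambda>A. trace (A ** - tensor w w)) ` pucci_class lam Lam \<noteq> {}"
    using scaled_identity_in_pucci_class[OF assms(2)] by blast
next
  fix x assume "x \<in> (\<lambda>A. trace (A ** - tensor w w)) ` pucci_class lam Lam"
  then obtain A where "symmetric_mat A" and "\<And>c. is_eigenvalue A c \<Longrightarrow> lam \<le> c"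
    and x: "x = trace (A ** - tensor w w)"
    unfolding pucci_class_def by blast
  hence "0 \<le> inner w (A *v w)"
    using assms(1) by (intro psd_of_nonneg_eigenvalues) force+
  thus "x \<le> 0" by (simp add: x trace_mult_neg_tensor)
qed

lemma F_antimono_rank_one:
  fixes F :: "real^'n^'n \<Rightarrow> real^'n \<Rightarrow> real \<Rightarrow> real"
  assumes lam: "0 < lam" "lam \<le> Lam"
    and H0: "\<And>s M p u. 0 \<le> s \<Longrightarrow> symmetric_mat M \<Longrightarrow>
               F (s *\<^sub>R M) (s *\<^sub>R p) (s * u) = s * F M p u"
    and H1_upper: "\<And>M M' p q u v. symmetric_mat M \<Longrightarrow> symmetric_mat M' \<Longrightarrow>
               F M p u - F M' q v
                 \<le> pucci_plus lam Lam (M - M') + \<gamma> * norm (p - q) + \<delta> * \<bar>u - v\<bar>"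
    and H3_upper: "\<And>M M' p q u v. symmetric_mat M \<Longrightarrow> symmetric_mat M' \<Longrightarrow>
               F M p u - F M' q v \<le> F (M - M') (p - q) (u - v)"
    and S: "symmetric_mat S" and s: "0 \<le> s"
  shows "F (S - s *\<^sub>R tensor w w) z u \<le> F S z u"
proof -
  have sym_neg: "symmetric_mat (- tensor w w)"
    by (rule symmetric_mat_uminus[OF symmetric_mat_tensor])
  have F0: "F 0 0 0 = 0" using H0[of 0 0 0 0] symmetric_mat_zero by simp
  have "F (- tensor w w) 0 0 - F 0 0 0 \<le> pucci_plus lam Lam (- tensor w w)"
    using H1_upper[OF sym_neg symmetric_mat_zero, of 0 0 0 0] by simp
  hence neg: "F (- tensor w w) 0 0 \<le> 0"
    using pucci_plus_neg_tensor_nonpos[OF lam, of w] F0 by simp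
  have "F (S - s *\<^sub>R tensor w w) z u - F S z u \<le> F (s *\<^sub>R (- tensor w w)) (s *\<^sub>R 0) (s * 0)"
    using H3_upper[where M="S - s *\<^sub>R tensor w w" and M'=S and p=z and q=z and u=u and v=u] S
    by (simp add: symmetric_mat_diff symmetric_mat_scaleR symmetric_mat_tensor)
  also have "\<dots> = s * F (- tensor w w) 0 0" by (rule H0[OF s sym_neg])
  also have "\<dots> \<le> 0" using s neg by (simp add: mult_nonneg_nonpos)
  finally show ?thesis by simp
qed

text \<open>Sublinearity: subadditivity from (H3) and positive homogeneity from (H0)
  give Jensen's inequality for two points.\<close>
lemma F_convex_combination:
  fixes F :: "real^'n^'n \<Rightarrow> real^'n \<Rightarrow> real \<Rightarrow> real"
  assumes H0: "\<And>s M p u. 0 \<le> s \<Longrightarrow> symmetric_mat M \<Longrightarrow>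
               F (s *\<^sub>R M) (s *\<^sub>R p) (s * u) = s * F M p u"
    and H3_upper: "\<And>M M' p q u v. symmetric_mat M \<Longrightarrow> symmetric_mat M' \<Longrightarrow>
               F M p u - F M' q v \<le> F (M - M') (p - q) (u - v)"
    and M: "symmetric_mat M" and M': "symmetric_mat M'" and t: "0 \<le> t" "t \<le> 1"
  shows "F ((1 - t) *\<^sub>R M + t *\<^sub>R M') ((1 - t) *\<^sub>R p + t *\<^sub>R q) ((1 - t) * u + t * v)
           \<le> (1 - t) * F M p u + t * F M' q v"
proof -
  have subadd: "F (X + Y) (a + b) (c + d) \<le> F X a c + F Y b d"
    if "symmetric_mat X" "symmetric_mat Y" for X Y a b c d
    using H3_upper[where M="X + Y" and M'=Y and p="a + b" and q=b and u="c + d" and v=d] that by (simp add: symmetric_mat_add)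
  have "F ((1 - t) *\<^sub>R M + t *\<^sub>R M') ((1 - t) *\<^sub>R p + t *\<^sub>R q) ((1 - t) * u + t * v)
          \<le> F ((1 - t) *\<^sub>R M) ((1 - t) *\<^sub>R p) ((1 - t) * u) + F (t *\<^sub>R M') (t *\<^sub>R q) (t * v)"
    using M M' by (intro subadd symmetric_mat_scaleR)
  also have "\<dots> = (1 - t) * F M p u + t * F M' q v"
    using H0[of "1 - t" M p u] H0[of t M' q v] t M M' by simp
  finally show ?thesis .
qed

lemma tensor_convex_combination:
  "tensor ((1 - t) *\<^sub>R x + t *\<^sub>R y) ((1 - t) *\<^sub>R x + t *\<^sub>R y) =
     (1 - t) *\<^sub>R tensor x x + t *\<^sub>R tensor y y - ((1 - t) * t) *\<^sub>R tensor (x - y) (x - y)"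
  by (simp add: vec_eq_iff tensor_def algebra_simps)

theorem mainTheorem18:
  fixes F :: "real^'n^'n \<Rightarrow> real^'n \<Rightarrow> real \<Rightarrow> real"
    and l :: "real^'n \<Rightarrow> real^'n^'n"
    and lam Lam \<gamma> \<delta> :: real
  assumes lam_pos: "0 < lam" and lam_le: "lam \<le> Lam"
    and H0: "\<And>s M p u. 0 \<le> s \<Longrightarrow> symmetric_mat M \<Longrightarrow>
               F (s *\<^sub>R M) (s *\<^sub>R p) (s * u) = s * F M p u"
    and gamma_nonneg: "0 \<le> \<gamma>" and delta_nonneg: "0 \<le> \<delta>"
    and H1: "\<And>M M' p q u v. symmetric_mat M \<Longrightarrow> symmetric_mat M' \<Longrightarrow>
               pucci_minus lam Lam (M - M') - \<gamma> * norm (p - q) - \<delta> * \<bar>u - v\<bar>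
                 \<le> F M p u - F M' q v
             \<and> F M p u - F M' q v
                 \<le> pucci_plus lam Lam (M - M') + \<gamma> * norm (p - q) + \<delta> * \<bar>u - v\<bar>"
    and H3: "\<And>M M' p q u v. symmetric_mat M \<Longrightarrow> symmetric_mat M' \<Longrightarrow>
               - F (- (M - M')) (- (p - q)) (- (u - v)) \<le> F M p u - F M' q v
             \<and> F M p u - F M' q v \<le> F (M - M') (p - q) (u - v)"
    and l_linear: "linear l"
    and l_sym: "\<And>p. symmetric_mat (l p)"
  shows "convex_on UNIV (\<lambda>p. F (l p + tensor p p) p 1)"
proof (rule convex_onI)
  fix t :: real and x y :: "real^'n"
  assume t: "0 < t" "t < 1"
  define z where "z = (1 - t) *\<^sub>R x + t *\<^sub>R y"
  define S where "S = (1 - t) *\<^sub>R (l x + tensor x x) + t *\<^sub>R (l y + tensor y y)"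
  have H1_upper: "F M p u - F M' q v
        \<le> pucci_plus lam Lam (M - M') + \<gamma> * norm (p - q) + \<delta> * \<bar>u - v\<bar>"
    if "symmetric_mat M" "symmetric_mat M'" for M M' p q u v
    using H1[OF that] by blast
  have H3_upper: "F M p u - F M' q v \<le> F (M - M') (p - q) (u - v)"
    if "symmetric_mat M" "symmetric_mat M'" for M M' p q u v
    using H3[OF that] by blast
  have sym: "symmetric_mat (l p + tensor p p)" for p
    by (intro symmetric_mat_add l_sym symmetric_mat_tensor)
  have "l z + tensor z z = S - ((1 - t) * t) *\<^sub>R tensor (x - y) (x - y)"
    unfolding S_def z_def linear_add[OF l_linear] linear_scale[OF l_linear]
      tensor_convex_combination by (simp add: algebra_simps)
  hence "F (l z + tensor z z) z 1 \<le> F S z 1"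
    using F_antimono_rank_one[OF lam_pos lam_le H0 H1_upper H3_upper] sym t
    by (simp add: S_def symmetric_mat_add symmetric_mat_scaleR)
  also have "\<dots> \<le> (1 - t) * F (l x + tensor x x) x 1 + t * F (l y + tensor y y) y 1"
    using F_convex_combination[OF H0 H3_upper sym sym, where t=t and p=x and q=y and u=1 and v=1] t
    by (simp add: S_def z_def)
  finally show "F (l z + tensor z z) z 1
      \<le> (1 - t) * F (l x + tensor x x) x 1 + t * F (l y + tensor y y) y 1" .
qed simp

end
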